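(* For $\mathbf F\in\mathcal M_1^n$ and $\Lambda\in\mathcal Q_n$, we have $\mathcal C(\mathbf F)\subset\mathcal C(\Lambda\mathbf F)$.
   Context: $\mathcal M_1$ is the set of cdfs on $\mathbb{R}$ with finite mean. For $F,G\in\mathcal M_1$, $F\prec_{\mathrm{cx}}G$ (convex order) means $\int\phi\,\mathrm dF\le\int\phi\,\mathrm dG$ for all convex $\phi:\mathbb{R}\to\mathbb{R}$. The quantile function of a cdf $F$ is $F^{-1}(p)=\inf\{x: F(x)\ge p\}$, $p\in(0,1)$. For cdfs $F_1,\dots,F_n$, $F_1\oplus\dots\oplus F_n$ denotes the cdf with quantile function $F_1^{-1}+\dots+F_n^{-1}$. For $\mathbf F=(F_1,\dots,F_n)\in\mathcal M_1^n$, $\mathcal C(\mathbf F)=\{G\in\mathcal M_1: G\prec_{\mathrm{cx}}F_1\oplus\dots\oplus F_n\}$. $\mathcal Q_n$ is the set of $n\times n$ doubly stochastic matrices; for $\Lambda=(\Lambda_{ij})\in\mathcal Q_n$, $\Lambda\mathbf F$ is the tuple with $i$-th component $\sum_j\Lambda_{ij}F_j$. *)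

theory Defs
  imports "HOL-Analysis.Analysis"
begin

definition is_cdf :: "(real \<Rightarrow> real) \<Rightarrow> bool" where
  "is_cdf F \<longleftrightarrow> mono F \<and> (\<forall>a. continuous (at_right a) F)
     \<and> (F \<longlongrightarrow> 0) at_bot \<and> (F \<longlongrightarrow> 1) at_top"

abbreviation cdf_measure :: "(real \<Rightarrow> real) \<Rightarrow> real measure" where
  "cdf_measure F \<equiv> interval_measure F"

definition M1 :: "(real \<Rightarrow> real) set" where
  "M1 = {F. is_cdf F \<and> integrable (cdf_measure F) (\<lambda>x. x)}"

text \<open>Integral of phi w.r.t. dF, as an extended real (positive part minus negative part);
  well defined in (-inf, +inf] for convex phi and F with finite mean.\<close>
definition cdf_integral :: "(real \<Rightarrow> real) \<Rightarrow> (real \<Rightarrow> real) \<Rightarrow> ereal" where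
  "cdf_integral F \<phi> =
     enn2ereal (\<integral>\<^sup>+ x. ennreal (max (\<phi> x) 0) \<partial>cdf_measure F)
   - enn2ereal (\<integral>\<^sup>+ x. ennreal (max (- \<phi> x) 0) \<partial>cdf_measure F)"

definition cx_le :: "(real \<Rightarrow> real) \<Rightarrow> (real \<Rightarrow> real) \<Rightarrow> bool" where
  "cx_le F G \<longleftrightarrow> (\<forall>\<phi>. convex_on UNIV \<phi> \<longrightarrow> cdf_integral F \<phi> \<le> cdf_integral G \<phi>)"

definition quantile :: "(real \<Rightarrow> real) \<Rightarrow> real \<Rightarrow> real" where
  "quantile F p = Inf {x. F x \<ge> p}"

definition comon_sum :: "nat \<Rightarrow> (nat \<Rightarrow> real \<Rightarrow> real) \<Rightarrow> (real \<Rightarrow> real)" where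
  "comon_sum n F = (THE G. is_cdf G \<and>
      (\<forall>p\<in>{0<..<1}. quantile G p = (\<Sum>i<n. quantile (F i) p)))"

definition CF :: "nat \<Rightarrow> (nat \<Rightarrow> real \<Rightarrow> real) \<Rightarrow> (real \<Rightarrow> real) set" where
  "CF n F = {G \<in> M1. cx_le G (comon_sum n F)}"

definition doubly_stochastic :: "nat \<Rightarrow> (nat \<Rightarrow> nat \<Rightarrow> real) \<Rightarrow> bool" where
  "doubly_stochastic n L \<longleftrightarrow> (\<forall>i<n. \<forall>j<n. L i j \<ge> 0)
     \<and> (\<forall>i<n. (\<Sum>j<n. L i j) = 1) \<and> (\<forall>j<n. (\<Sum>i<n. L i j) = 1)"

definition mat_mix :: "nat \<Rightarrow> (nat \<Rightarrow> nat \<Rightarrow> real) \<Rightarrow> (nat \<Rightarrow> real \<Rightarrow> real) \<Rightarrow> (nat \<Rightarrow> real \<Rightarrow> real)" where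
  "mat_mix n L F = (\<lambda>i x. \<Sum>j<n. L i j * F j x)"

end

theory Submission
  imports Defs "HOL-Probability.Probability"
begin

(* Realise every cdf G on the uniform probability space on (0,1) by its quantile function:
   G is the law of quantile G, and F_1 (+) ... (+) F_n is the law of f = sum_j quantile F_j.
   Let g = sum_i quantile H_i for the rows H_i = sum_j Lambda_ij F_j of Lambda F.  The tail
   integral of a quantile over (s,1) equals min_t ((1 - s) t + E (X - t)^+), and at fixed t the
   expression is linear in the cdf; as Lambda is doubly stochastic this gives equal means and
   dominating upper tail integrals: f is majorized by g.  For convex phi,
   phi g >= phi f + phi' f (g - f), and phi' f is nondecreasing in p, so by a layer-cake argument
   its integral against g - f is nonnegative.  Replacing phi by tangent lines outside [-M, M]
   keeps phi' bounded, and monotone convergence in M removes this truncation.  Hence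
   F_1 (+) ... (+) F_n <=cx (Lambda F)_1 (+) ... (+) (Lambda F)_n, and transitivity of the
   convex order finishes the proof. *)

lemma is_cdf_bounds:
  assumes "is_cdf G"
  shows "0 \<le> G x" and "G x \<le> 1"
proof -
  have m: "mono G" and bot: "(G \<longlongrightarrow> 0) at_bot" and top: "(G \<longlongrightarrow> 1) at_top"
    using assms by (auto simp: is_cdf_def)
  have "\<forall>\<^sub>F y in at_bot. G y \<le> G x"
    unfolding eventually_at_bot_linorder by (auto intro: monoD[OF m])
  then show "0 \<le> G x" by (rule tendsto_upperbound[OF bot]) simp
  have "\<forall>\<^sub>F y in at_top. G x \<le> G y"
    unfolding eventually_at_top_linorder by (auto intro: monoD[OF m])
  then show "G x \<le> 1" by (rule tendsto_lowerbound[OF top]) simp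
qed

lemma borel_measurable_cdf: "is_cdf G \<Longrightarrow> G \<in> borel_measurable borel"
  by (rule borel_measurable_mono) (simp add: is_cdf_def)

lemma cdf_superlevel_eq:
  assumes G: "is_cdf G" and p: "0 < p" "p < 1"
  shows "{x. p \<le> G x} = {quantile G p..}"
proof -
  define S where "S = {x. p \<le> G x}"
  have m: "mono G" using G by (simp add: is_cdf_def)
  have up: "y \<in> S" if "x \<in> S" "x \<le> y" for x y
    using that monoD[OF m, of x y] by (simp add: S_def)
  have "\<forall>\<^sub>F x in at_top. p < G x" using G p by (auto simp: is_cdf_def intro: order_tendstoD)
  then obtain x where "p < G x" by (auto simp: eventually_at_top_linorder)
  then have "S \<noteq> {}" by (auto simp: S_def dest: less_imp_le)
  have "\<forall>\<^sub>F x in at_bot. G x < p" using G p by (auto simp: is_cdf_def intro: order_tendstoD)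
  then obtain b where b: "\<And>x. x \<le> b \<Longrightarrow> G x < p" by (auto simp: eventually_at_bot_linorder)
  have "b \<le> x" if "x \<in> S" for x
    using that b[of x] by (cases "x \<le> b") (auto simp: S_def)
  then have bdd: "bdd_below S" by (rule bdd_belowI)
  have "y \<in> S" if "Inf S < y" for y
    using cInf_lessD[OF \<open>S \<noteq> {}\<close> that] up less_imp_le by blast
  then have "\<forall>\<^sub>F y in at_right (Inf S). p \<le> G y"
    unfolding eventually_at_right_field by (auto simp: S_def intro!: exI[of _ "Inf S + 1"])
  moreover have "(G \<longlongrightarrow> G (Inf S)) (at_right (Inf S))"
    using G by (simp add: is_cdf_def continuous_within)
  ultimately have "Inf S \<in> S" by (simp add: S_def tendsto_lowerbound)
  then have "S = {Inf S..}" using up cInf_lower[OF _ bdd] by auto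
  then show ?thesis by (simp add: S_def quantile_def)
qed

lemma quantile_le_iff:
  assumes "is_cdf G" "0 < p" "p < 1"
  shows "quantile G p \<le> x \<longleftrightarrow> p \<le> G x"
  using cdf_superlevel_eq[OF assms] by blast

lemma quantile_mono:
  assumes G: "is_cdf G" and p: "0 < p" "p \<le> p'" "p' < 1"
  shows "quantile G p \<le> quantile G p'"
  using quantile_le_iff[OF G, of p' "quantile G p'"] quantile_le_iff[OF G, of p "quantile G p'"] p
  by simp

lemma mono_on_quantile: "is_cdf G \<Longrightarrow> mono_on {0<..<1} (quantile G)"
  by (auto intro!: mono_onI quantile_mono)

lemma quantile_tendsto_at_left:
  assumes G: "is_cdf G" and p: "0 < p" "p < 1"
  shows "(quantile G \<longlongrightarrow> quantile G p) (at_left p)"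
proof (rule order_tendstoI)
  fix a assume "a < quantile G p"
  then have "G a < p" using quantile_le_iff[OF G p, of a] by simp
  have "a < quantile G y" if "max (G a) 0 < y" "y < p" for y
    using quantile_le_iff[OF G, of y a] that p by auto
  then show "\<forall>\<^sub>F y in at_left p. a < quantile G y"
    unfolding eventually_at_left_field using \<open>G a < p\<close> p by (intro exI[of _ "max (G a) 0"]) auto
next
  fix a assume "quantile G p < a"
  then have "quantile G y < a" if "0 < y" "y < p" for y
    using quantile_mono[OF G, of y p] that p by linarith
  then show "\<forall>\<^sub>F y in at_left p. quantile G y < a"
    unfolding eventually_at_left_field using p by (intro exI[of _ 0]) auto
qed

lemma cdf_eqI_quantile:
  assumes G: "is_cdf G" and G': "is_cdf G'"
    and eq: "\<And>p. 0 < p \<Longrightarrow> p < 1 \<Longrightarrow> quantile G p = quantile G' p"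
  shows "G = G'"
proof -
  have "\<not> A x < B x" if A: "is_cdf A" "is_cdf B"
    and eq: "\<And>p. 0 < p \<Longrightarrow> p < 1 \<Longrightarrow> quantile A p = quantile B p" for A B x
  proof
    assume less: "A x < B x"
    define p where "p = (A x + B x) / 2"
    have p: "0 < p" "p < 1"
      using is_cdf_bounds[OF A(1), of x] is_cdf_bounds[OF A(2), of x] less by (auto simp: p_def)
    have "p \<le> B x" "\<not> p \<le> A x" using less by (auto simp: p_def)
    then show False using quantile_le_iff[OF A(1) p] quantile_le_iff[OF A(2) p] eq[OF p] by simp
  qed
  from this[OF G G' eq] this[OF G' G] eq show ?thesis
    by (intro ext antisym) (simp_all add: not_less)
qed

definition uniform01 :: "real measure" where
  "uniform01 = restrict_space lborel {0<..<1}"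

lemma space_uniform01 [simp]: "space uniform01 = {0<..<1}"
  by (simp add: uniform01_def)

lemma sets_uniform01: "sets uniform01 = sets (restrict_space borel {0<..<1})"
  unfolding uniform01_def by (rule sets_restrict_space_cong) simp

interpretation uniform01: prob_space uniform01
  unfolding uniform01_def by (rule prob_space_restrict_space) auto

lemma emeasure_uniform01:
  "A \<subseteq> {0<..<1} \<Longrightarrow> A \<in> sets borel \<Longrightarrow> emeasure uniform01 A = emeasure lborel A"
  unfolding uniform01_def by (rule emeasure_restrict_space) auto

lemma borel_measurable_uniform01: "h \<in> borel_measurable borel \<Longrightarrow> h \<in> borel_measurable uniform01"
  unfolding uniform01_def by (rule measurable_restrict_space1) simp

lemma borel_measurable_uniform01_mono_on:
  fixes g :: "real \<Rightarrow> real"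
  shows "mono_on {0<..<1} g \<Longrightarrow> g \<in> borel_measurable uniform01"
  unfolding measurable_cong_sets[OF sets_uniform01 refl] by (rule borel_measurable_mono_on_fnc)

lemma borel_measurable_quantile: "is_cdf G \<Longrightarrow> quantile G \<in> borel_measurable uniform01"
  by (rule borel_measurable_uniform01_mono_on[OF mono_on_quantile])

lemma emeasure_uniform01_le:
  assumes "0 \<le> a" "a \<le> 1"
  shows "emeasure uniform01 {p \<in> space uniform01. p \<le> a} = ennreal a"
proof (cases "a < 1")
  case True
  then have "{p \<in> space uniform01. p \<le> a} = {0<..a}" by auto
  moreover have "emeasure uniform01 {0<..a} = emeasure lborel {0<..a}"
    using True by (intro emeasure_uniform01) auto
  ultimately show ?thesis using assms by simp
next
  case False
  then have "{p \<in> space uniform01. p \<le> a} = space uniform01" using assms by auto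
  then show ?thesis using False assms uniform01.emeasure_space_1 by (simp del: space_uniform01)
qed

lemma measure_uniform01_le:
  assumes "0 \<le> a" "a \<le> 1"
  shows "measure uniform01 {p \<in> space uniform01. p \<le> a} = a"
  using emeasure_uniform01_le[OF assms] assms by (simp add: uniform01.emeasure_eq_measure)

lemma emeasure_quantile_le:
  assumes G: "is_cdf G"
  shows "emeasure uniform01 {p \<in> space uniform01. quantile G p \<le> y} = ennreal (G y)"
proof -
  have "{p \<in> space uniform01. quantile G p \<le> y} = {p \<in> space uniform01. p \<le> G y}"
    using quantile_le_iff[OF G] by auto
  then show ?thesis using emeasure_uniform01_le is_cdf_bounds[OF G] by simp
qed

lemma emeasure_quantile_gt:
  assumes G: "is_cdf G"
  shows "emeasure uniform01 {p \<in> space uniform01. y < quantile G p} = ennreal (1 - G y)"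
proof -
  note [measurable] = borel_measurable_quantile[OF G]
  have "{p \<in> space uniform01. y < quantile G p}
      = space uniform01 - {p \<in> space uniform01. quantile G p \<le> y}" by auto
  also have "emeasure uniform01 \<dots> = ennreal 1 - ennreal (G y)"
  proof (subst emeasure_compl)
    show "{p \<in> space uniform01. quantile G p \<le> y} \<in> sets uniform01" by measurable
  qed (simp_all only: emeasure_quantile_le[OF G] uniform01.emeasure_space_1, simp_all)
  moreover have "ennreal 1 - ennreal (G y) = ennreal (1 - G y)"
    using is_cdf_bounds[OF G] by (simp only: ennreal_minus)
  ultimately show ?thesis by simp
qed

lemma is_cdf_cdf:
  assumes "real_distribution M"
  shows "is_cdf (cdf M)"
proof -
  interpret real_distribution M by fact
  show ?thesis
    unfolding is_cdf_def using cdf_is_right_cont cdf_lim_at_bot cdf_lim_at_top_prob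
    by (auto intro: monoI cdf_nondecreasing)
qed

lemma
  assumes "is_cdf G"
  shows real_distribution_cdf_measure: "real_distribution (cdf_measure G)"
    and cdf_cdf_measure: "cdf (cdf_measure G) = G"
  using assms
  by (auto simp: is_cdf_def intro: real_distribution_interval_measure cdf_interval_measure dest: monoD)

lemma measure_sublevel_ge:
  fixes g :: "real \<Rightarrow> real"
  assumes mono: "mono_on {0<..<1} g" and p: "0 < p" "p < 1" and "g p \<le> x"
  shows "p \<le> measure uniform01 {u \<in> space uniform01. g u \<le> x}"
proof -
  note [measurable] = borel_measurable_uniform01_mono_on[OF mono]
  have "{u \<in> space uniform01. u \<le> p} \<subseteq> {u \<in> space uniform01. g u \<le> x}"
    using mono_onD[OF mono, of _ p] p assms(4) by fastforce
  then have "measure uniform01 {u \<in> space uniform01. u \<le> p}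
      \<le> measure uniform01 {u \<in> space uniform01. g u \<le> x}"
    by (intro uniform01.finite_measure_mono) measurable
  then show ?thesis using measure_uniform01_le[of p] p by simp
qed

lemma measure_sublevel_less:
  fixes g :: "real \<Rightarrow> real"
  assumes mono: "mono_on {0<..<1} g" and lc: "(g \<longlongrightarrow> g p) (at_left p)"
    and p: "0 < p" "p < 1" and "x < g p"
  shows "measure uniform01 {u \<in> space uniform01. g u \<le> x} < p"
proof -
  note [measurable] = borel_measurable_uniform01_mono_on[OF mono]
  have "\<forall>\<^sub>F u in at_left p. x < g u" using lc \<open>x < g p\<close> by (rule order_tendstoD)
  then obtain b where b: "b < p" "\<And>u. b < u \<Longrightarrow> u < p \<Longrightarrow> x < g u"
    unfolding eventually_at_left_field by blast
  have "u \<le> max b 0" if u: "u \<in> space uniform01" "g u \<le> x" for u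
  proof (rule ccontr)
    assume "\<not> u \<le> max b 0"
    then have "b < u" by simp
    then have "x < g u"
      using u b(2)[of u] mono_onD[OF mono, of p u] p \<open>x < g p\<close> by (cases "u < p") auto
    then show False using u by simp
  qed
  then have "{u \<in> space uniform01. g u \<le> x} \<subseteq> {u \<in> space uniform01. u \<le> max b 0}"
    by auto
  moreover have "(\<lambda>u. u) \<in> borel_measurable uniform01" by (rule borel_measurable_uniform01) simp
  then have "{u \<in> space uniform01. u \<le> max b 0} \<in> sets uniform01"
    unfolding borel_measurable_iff_le by blast
  ultimately have "measure uniform01 {u \<in> space uniform01. g u \<le> x}
      \<le> measure uniform01 {u \<in> space uniform01. u \<le> max b 0}"
    by (rule uniform01.finite_measure_mono)
  also have "\<dots> = max b 0" using measure_uniform01_le[of "max b 0"] b p by simp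
  finally show ?thesis using b p by simp
qed

lemma exists_cdf_with_quantile:
  fixes g :: "real \<Rightarrow> real"
  assumes mono: "mono_on {0<..<1} g"
    and lc: "\<And>p. 0 < p \<Longrightarrow> p < 1 \<Longrightarrow> (g \<longlongrightarrow> g p) (at_left p)"
  shows "\<exists>G. is_cdf G \<and> (\<forall>p\<in>{0<..<1}. quantile G p = g p)"
proof -
  note [measurable] = borel_measurable_uniform01_mono_on[OF mono]
  define M where "M = distr uniform01 borel g"
  have M: "real_distribution M" unfolding M_def by simp
  have cdf_M: "cdf M x = measure uniform01 {u \<in> space uniform01. g u \<le> x}" for x
    unfolding cdf_def M_def by (subst measure_distr) (auto intro: arg_cong[where f="measure _"])
  have "p \<le> cdf M x \<longleftrightarrow> g p \<le> x" if "0 < p" "p < 1" for p x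
    using measure_sublevel_ge[OF mono that] measure_sublevel_less[OF mono lc[OF that] that]
    unfolding cdf_M by (meson not_le)
  then have "{x. p \<le> cdf M x} = {g p..}" if "0 < p" "p < 1" for p
    using that by auto
  then show ?thesis using is_cdf_cdf[OF M] by (auto simp: quantile_def)
qed

lemma
  assumes F: "\<And>i. i < n \<Longrightarrow> is_cdf (F i)"
  shows is_cdf_comon_sum: "is_cdf (comon_sum n F)"
    and quantile_comon_sum:
      "\<And>p. 0 < p \<Longrightarrow> p < 1 \<Longrightarrow> quantile (comon_sum n F) p = (\<Sum>i<n. quantile (F i) p)"
proof -
  let ?P = "\<lambda>G. is_cdf G \<and> (\<forall>p\<in>{0<..<1}. quantile G p = (\<Sum>i<n. quantile (F i) p))"
  have "mono_on {0<..<1} (\<lambda>p. \<Sum>i<n. quantile (F i) p)"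
    using F by (auto intro!: mono_onI sum_mono quantile_mono)
  moreover have "((\<lambda>p. \<Sum>i<n. quantile (F i) p) \<longlongrightarrow> (\<Sum>i<n. quantile (F i) p)) (at_left p)"
    if "0 < p" "p < 1" for p
    using F that by (auto intro!: tendsto_sum quantile_tendsto_at_left)
  ultimately obtain G where G: "?P G" using exists_cdf_with_quantile by blast
  have "G' = G" if "?P G'" for G'
    using that G by (intro cdf_eqI_quantile) auto
  then have "?P (comon_sum n F)"
    unfolding comon_sum_def by (rule theI[of ?P, OF G])
  then show "is_cdf (comon_sum n F)"
    and "\<And>p. 0 < p \<Longrightarrow> p < 1 \<Longrightarrow> quantile (comon_sum n F) p = (\<Sum>i<n. quantile (F i) p)"
    by auto
qed

lemma cdf_measure_eq_distr_quantile:
  assumes G: "is_cdf G"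
  shows "cdf_measure G = distr uniform01 borel (quantile G)"
proof (rule cdf_unique)
  note [measurable] = borel_measurable_quantile[OF G]
  show "real_distribution (cdf_measure G)" by (rule real_distribution_cdf_measure[OF G])
  show "real_distribution (distr uniform01 borel (quantile G))" by simp
  have "cdf (distr uniform01 borel (quantile G)) x = G x" for x
  proof -
    have "cdf (distr uniform01 borel (quantile G)) x
        = measure uniform01 {p \<in> space uniform01. quantile G p \<le> x}"
      unfolding cdf_def by (subst measure_distr) (auto intro: arg_cong[where f="measure _"])
    also have "\<dots> = G x"
      using emeasure_quantile_le[OF G, of x] is_cdf_bounds[OF G, of x]
      by (simp add: uniform01.emeasure_eq_measure del: space_uniform01)
    finally show ?thesis .
  qed
  then show "cdf (cdf_measure G) = cdf (distr uniform01 borel (quantile G))"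
    using cdf_cdf_measure[OF G] by auto
qed

lemma integrable_quantile: "F \<in> M1 \<Longrightarrow> integrable uniform01 (quantile F)"
  unfolding M1_def
  by (auto simp: cdf_measure_eq_distr_quantile integrable_distr_eq borel_measurable_quantile)

lemma nn_integral_layer_cake:
  fixes a b :: "'a \<Rightarrow> real" and e :: "'a \<Rightarrow> ennreal"
  assumes M: "sigma_finite_measure M"
    and [measurable]: "a \<in> borel_measurable M" "b \<in> borel_measurable M" "e \<in> borel_measurable M"
  shows "(\<integral>\<^sup>+x. ennreal (b x - a x) * e x \<partial>M)
       = (\<integral>\<^sup>+y. \<integral>\<^sup>+x. indicator {x \<in> space M. a x \<le> y \<and> y < b x} x * e x \<partial>M \<partial>lborel)"
proof -
  interpret pair_sigma_finite M lborel
    using M by (simp add: pair_sigma_finite_def lborel.sigma_finite_measure_axioms)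
  have "ennreal (b x - a x) = (\<integral>\<^sup>+y. indicator {a x..<b x} y \<partial>lborel)" for x
    by (cases "a x \<le> b x") (auto simp: ennreal_neg)
  then have "(\<integral>\<^sup>+x. ennreal (b x - a x) * e x \<partial>M)
      = (\<integral>\<^sup>+x. \<integral>\<^sup>+y. indicator {a x..<b x} y * e x \<partial>lborel \<partial>M)"
    by (simp add: nn_integral_multc)
  also have "\<dots> = (\<integral>\<^sup>+y. \<integral>\<^sup>+x. indicator {a x..<b x} y * e x \<partial>M \<partial>lborel)"
  proof (rule Fubini'[symmetric])
    have "(\<lambda>(x, y). indicator {a x..<b x} y * e x)
        = (\<lambda>z. if a (fst z) \<le> snd z \<and> snd z < b (fst z) then e (fst z) else 0)"
      by (auto simp: fun_eq_iff split: split_indicator)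
    moreover have "(\<lambda>z. if a (fst z) \<le> snd z \<and> snd z < b (fst z) then e (fst z) else 0)
        \<in> borel_measurable (M \<Otimes>\<^sub>M lborel)"
      by measurable
    ultimately show "(\<lambda>(x, y). indicator {a x..<b x} y * e x) \<in> borel_measurable (M \<Otimes>\<^sub>M lborel)"
      by simp
  qed
  also have "\<dots> = (\<integral>\<^sup>+y. \<integral>\<^sup>+x. indicator {x \<in> space M. a x \<le> y \<and> y < b x} x * e x \<partial>M \<partial>lborel)"
    by (intro nn_integral_cong) (simp split: split_indicator)
  finally show ?thesis .
qed

lemma nn_integral_quantile_excess:
  assumes G: "is_cdf G"
  shows "(\<integral>\<^sup>+p. ennreal (quantile G p - t) \<partial>uniform01)
       = (\<integral>\<^sup>+y. ennreal (indicator {t..} y * (1 - G y)) \<partial>lborel)"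
proof -
  note [measurable] = borel_measurable_quantile[OF G]
  have "(\<integral>\<^sup>+p. ennreal (quantile G p - t) \<partial>uniform01)
      = (\<integral>\<^sup>+y. \<integral>\<^sup>+p. indicator {p \<in> space uniform01. t \<le> y \<and> y < quantile G p} p * 1 \<partial>uniform01 \<partial>lborel)"
    using nn_integral_layer_cake[of uniform01 "\<lambda>_. t" "quantile G" "\<lambda>_. 1"]
    by (simp add: uniform01.sigma_finite_measure_axioms del: space_uniform01)
  also have "\<dots> = (\<integral>\<^sup>+y. ennreal (indicator {t..} y * (1 - G y)) \<partial>lborel)"
  proof (intro nn_integral_cong)
    fix y :: real
    have [measurable]: "{p \<in> space uniform01. y < quantile G p} \<in> sets uniform01" by measurable
    have "{p \<in> space uniform01. t \<le> y \<and> y < quantile G p}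
        = (if t \<le> y then {p \<in> space uniform01. y < quantile G p} else {})" by auto
    then show "(\<integral>\<^sup>+p. indicator {p \<in> space uniform01. t \<le> y \<and> y < quantile G p} p * 1 \<partial>uniform01)
        = ennreal (indicator {t..} y * (1 - G y))"
      using emeasure_quantile_gt[OF G, of y] by (simp del: space_uniform01)
  qed
  finally show ?thesis .
qed

lemma nn_integral_quantile_shortfall:
  assumes G: "is_cdf G"
  shows "(\<integral>\<^sup>+p. ennreal (t - quantile G p) \<partial>uniform01)
       = (\<integral>\<^sup>+y. ennreal (indicator {..<t} y * G y) \<partial>lborel)"
proof -
  note [measurable] = borel_measurable_quantile[OF G]
  have "(\<integral>\<^sup>+p. ennreal (t - quantile G p) \<partial>uniform01)
      = (\<integral>\<^sup>+y. \<integral>\<^sup>+p. indicator {p \<in> space uniform01. quantile G p \<le> y \<and> y < t} p * 1 \<partial>uniform01 \<partial>lborel)"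
    using nn_integral_layer_cake[of uniform01 "quantile G" "\<lambda>_. t" "\<lambda>_. 1"]
    by (simp add: uniform01.sigma_finite_measure_axioms del: space_uniform01)
  also have "\<dots> = (\<integral>\<^sup>+y. ennreal (indicator {..<t} y * G y) \<partial>lborel)"
  proof (intro nn_integral_cong)
    fix y :: real
    have [measurable]: "{p \<in> space uniform01. quantile G p \<le> y} \<in> sets uniform01" by measurable
    have "{p \<in> space uniform01. quantile G p \<le> y \<and> y < t}
        = (if y < t then {p \<in> space uniform01. quantile G p \<le> y} else {})" by auto
    then show "(\<integral>\<^sup>+p. indicator {p \<in> space uniform01. quantile G p \<le> y \<and> y < t} p * 1 \<partial>uniform01)
        = ennreal (indicator {..<t} y * G y)"
      using emeasure_quantile_le[OF G, of y] by (simp del: space_uniform01)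
  qed
  finally show ?thesis .
qed

lemma is_cdf_mixture:
  fixes F :: "nat \<Rightarrow> real \<Rightarrow> real"
  assumes F: "\<And>j. j < n \<Longrightarrow> is_cdf (F j)" and w: "\<And>j. j < n \<Longrightarrow> 0 \<le> w j" "(\<Sum>j<n. w j) = 1"
  shows "is_cdf (\<lambda>x. \<Sum>j<n. w j * F j x)"
  unfolding is_cdf_def
proof (intro conjI allI)
  show "mono (\<lambda>x. \<Sum>j<n. w j * F j x)"
    using F w by (auto intro!: monoI sum_mono mult_left_mono dest: monoD simp: is_cdf_def)
  show "continuous (at_right a) (\<lambda>x. \<Sum>j<n. w j * F j x)" for a
    using F by (auto intro!: continuous_sum continuous_mult continuous_const simp: is_cdf_def)
  have "((\<lambda>x. \<Sum>j<n. w j * F j x) \<longlongrightarrow> (\<Sum>j<n. w j * 0)) at_bot"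
    using F by (intro tendsto_sum tendsto_mult_left) (simp add: is_cdf_def)
  then show "((\<lambda>x. \<Sum>j<n. w j * F j x) \<longlongrightarrow> 0) at_bot" by simp
  have "((\<lambda>x. \<Sum>j<n. w j * F j x) \<longlongrightarrow> (\<Sum>j<n. w j * 1)) at_top"
    using F by (intro tendsto_sum tendsto_mult_left) (simp add: is_cdf_def)
  then show "((\<lambda>x. \<Sum>j<n. w j * F j x) \<longlongrightarrow> 1) at_top" using w by simp
qed

lemma nn_integral_weighted_sum:
  fixes h :: "'i \<Rightarrow> 'a \<Rightarrow> real"
  assumes w: "\<And>j. j \<in> I \<Longrightarrow> 0 \<le> w j" and h: "\<And>j x. j \<in> I \<Longrightarrow> 0 \<le> h j x"
    and [measurable]: "\<And>j. j \<in> I \<Longrightarrow> h j \<in> borel_measurable M"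
  shows "(\<integral>\<^sup>+x. ennreal (\<Sum>j\<in>I. w j * h j x) \<partial>M) = (\<Sum>j\<in>I. ennreal (w j) * (\<integral>\<^sup>+x. ennreal (h j x) \<partial>M))"
proof -
  have "(\<integral>\<^sup>+x. ennreal (\<Sum>j\<in>I. w j * h j x) \<partial>M) = (\<integral>\<^sup>+x. (\<Sum>j\<in>I. ennreal (w j) * ennreal (h j x)) \<partial>M)"
    using w h by (intro nn_integral_cong, subst sum_ennreal[symmetric]) (auto simp: ennreal_mult)
  also have "\<dots> = (\<Sum>j\<in>I. \<integral>\<^sup>+x. ennreal (w j) * ennreal (h j x) \<partial>M)"
    by (rule nn_integral_sum) simp
  also have "\<dots> = (\<Sum>j\<in>I. ennreal (w j) * (\<integral>\<^sup>+x. ennreal (h j x) \<partial>M))"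
    by (intro sum.cong refl nn_integral_cmult) simp
  finally show ?thesis .
qed

lemma nn_integral_quantile_mixture_excess:
  fixes F :: "nat \<Rightarrow> real \<Rightarrow> real"
  assumes F: "\<And>j. j < n \<Longrightarrow> is_cdf (F j)" and w: "\<And>j. j < n \<Longrightarrow> 0 \<le> w j" "(\<Sum>j<n. w j) = 1"
  shows "(\<integral>\<^sup>+p. ennreal (quantile (\<lambda>x. \<Sum>j<n. w j * F j x) p - t) \<partial>uniform01)
       = (\<Sum>j<n. ennreal (w j) * (\<integral>\<^sup>+p. ennreal (quantile (F j) p - t) \<partial>uniform01))"
proof -
  have "indicator {t..} y * (1 - (\<Sum>j<n. w j * F j y)) = (\<Sum>j<n. w j * (indicator {t..} y * (1 - F j y)))"
    for y :: real
    using w(2) by (auto simp: indicator_def sum_subtractf right_diff_distrib)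
  then have "(\<integral>\<^sup>+p. ennreal (quantile (\<lambda>x. \<Sum>j<n. w j * F j x) p - t) \<partial>uniform01)
      = (\<integral>\<^sup>+y. ennreal (\<Sum>j<n. w j * (indicator {t..} y * (1 - F j y))) \<partial>lborel)"
    by (simp add: nn_integral_quantile_excess is_cdf_mixture F w)
  also have "\<dots> = (\<Sum>j<n. ennreal (w j) * (\<integral>\<^sup>+y. ennreal (indicator {t..} y * (1 - F j y)) \<partial>lborel))"
  proof (rule nn_integral_weighted_sum)
    fix j y assume "j \<in> {..<n}"
    then have j: "j < n" by simp
    note [measurable] = borel_measurable_cdf[OF F[OF j]]
    show "0 \<le> w j" using w(1)[OF j] .
    show "0 \<le> indicator {t..} y * (1 - F j y)" using is_cdf_bounds[OF F[OF j]] by simp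
    show "(\<lambda>y. indicator {t..} y * (1 - F j y)) \<in> borel_measurable lborel" by measurable
  qed
  also have "\<dots> = (\<Sum>j<n. ennreal (w j) * (\<integral>\<^sup>+p. ennreal (quantile (F j) p - t) \<partial>uniform01))"
    using F by (simp add: nn_integral_quantile_excess)
  finally show ?thesis .
qed

lemma nn_integral_quantile_mixture_shortfall:
  fixes F :: "nat \<Rightarrow> real \<Rightarrow> real"
  assumes F: "\<And>j. j < n \<Longrightarrow> is_cdf (F j)" and w: "\<And>j. j < n \<Longrightarrow> 0 \<le> w j" "(\<Sum>j<n. w j) = 1"
  shows "(\<integral>\<^sup>+p. ennreal (t - quantile (\<lambda>x. \<Sum>j<n. w j * F j x) p) \<partial>uniform01)
       = (\<Sum>j<n. ennreal (w j) * (\<integral>\<^sup>+p. ennreal (t - quantile (F j) p) \<partial>uniform01))"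
proof -
  have "indicator {..<t} y * (\<Sum>j<n. w j * F j y) = (\<Sum>j<n. w j * (indicator {..<t} y * F j y))"
    for y :: real
    by (simp add: sum_distrib_left mult.left_commute)
  then have "(\<integral>\<^sup>+p. ennreal (t - quantile (\<lambda>x. \<Sum>j<n. w j * F j x) p) \<partial>uniform01)
      = (\<integral>\<^sup>+y. ennreal (\<Sum>j<n. w j * (indicator {..<t} y * F j y)) \<partial>lborel)"
    by (simp add: nn_integral_quantile_shortfall is_cdf_mixture F w)
  also have "\<dots> = (\<Sum>j<n. ennreal (w j) * (\<integral>\<^sup>+y. ennreal (indicator {..<t} y * F j y) \<partial>lborel))"
  proof (rule nn_integral_weighted_sum)
    fix j y assume "j \<in> {..<n}"
    then have j: "j < n" by simp
    note [measurable] = borel_measurable_cdf[OF F[OF j]]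
    show "0 \<le> w j" using w(1)[OF j] .
    show "0 \<le> indicator {..<t} y * F j y" using is_cdf_bounds[OF F[OF j]] by simp
    show "(\<lambda>y. indicator {..<t} y * F j y) \<in> borel_measurable lborel" by measurable
  qed
  also have "\<dots> = (\<Sum>j<n. ennreal (w j) * (\<integral>\<^sup>+p. ennreal (t - quantile (F j) p) \<partial>uniform01))"
    using F by (simp add: nn_integral_quantile_shortfall)
  finally show ?thesis .
qed

definition excess :: "(real \<Rightarrow> real) \<Rightarrow> real \<Rightarrow> real" where
  "excess q t = (\<integral>p. max 0 (q p - t) \<partial>uniform01)"

definition shortfall :: "(real \<Rightarrow> real) \<Rightarrow> real \<Rightarrow> real" where
  "shortfall q t = (\<integral>p. max 0 (t - q p) \<partial>uniform01)"

lemma excess_nonneg: "0 \<le> excess q t"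
  unfolding excess_def by (rule integral_nonneg_AE) auto

lemma shortfall_nonneg: "0 \<le> shortfall q t"
  unfolding shortfall_def by (rule integral_nonneg_AE) auto

lemma nn_integral_eq_excess:
  "integrable uniform01 q \<Longrightarrow> (\<integral>\<^sup>+p. ennreal (q p - t) \<partial>uniform01) = ennreal (excess q t)"
  unfolding excess_def by (subst nn_integral_eq_integral[symmetric]) (auto simp: ennreal_max_0)

lemma nn_integral_eq_shortfall:
  "integrable uniform01 q \<Longrightarrow> (\<integral>\<^sup>+p. ennreal (t - q p) \<partial>uniform01) = ennreal (shortfall q t)"
  unfolding shortfall_def by (subst nn_integral_eq_integral[symmetric]) (auto simp: ennreal_max_0)

lemma integral_eq_excess_shortfall:
  assumes q: "integrable uniform01 q"
  shows "(\<integral>p. q p \<partial>uniform01) = t + excess q t - shortfall q t"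
proof -
  have "(\<integral>p. q p \<partial>uniform01) = (\<integral>p. t + (max 0 (q p - t) - max 0 (t - q p)) \<partial>uniform01)"
    by (intro Bochner_Integration.integral_cong) auto
  also have "\<dots> = t + excess q t - shortfall q t"
    using q uniform01.prob_space by (simp add: excess_def shortfall_def)
  finally show ?thesis .
qed

lemma
  fixes F :: "nat \<Rightarrow> real \<Rightarrow> real"
  assumes F: "\<And>j. j < n \<Longrightarrow> F j \<in> M1" and w: "\<And>j. j < n \<Longrightarrow> 0 \<le> w j" "(\<Sum>j<n. w j) = 1"
  shows nn_integral_quantile_mixture_excess_eq:
      "(\<integral>\<^sup>+p. ennreal (quantile (\<lambda>x. \<Sum>j<n. w j * F j x) p - t) \<partial>uniform01)
     = ennreal (\<Sum>j<n. w j * excess (quantile (F j)) t)"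
    and nn_integral_quantile_mixture_shortfall_eq:
      "(\<integral>\<^sup>+p. ennreal (t - quantile (\<lambda>x. \<Sum>j<n. w j * F j x) p) \<partial>uniform01)
     = ennreal (\<Sum>j<n. w j * shortfall (quantile (F j)) t)"
proof -
  have F': "\<And>j. j < n \<Longrightarrow> is_cdf (F j)" using F by (simp add: M1_def)
  have q: "integrable uniform01 (quantile (F j))" if "j < n" for j using F[OF that] by (rule integrable_quantile)
  show "(\<integral>\<^sup>+p. ennreal (quantile (\<lambda>x. \<Sum>j<n. w j * F j x) p - t) \<partial>uniform01)
      = ennreal (\<Sum>j<n. w j * excess (quantile (F j)) t)"
  proof -
    have "(\<integral>\<^sup>+p. ennreal (quantile (\<lambda>x. \<Sum>j<n. w j * F j x) p - t) \<partial>uniform01)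
        = (\<Sum>j<n. ennreal (w j) * (\<integral>\<^sup>+p. ennreal (quantile (F j) p - t) \<partial>uniform01))"
      by (rule nn_integral_quantile_mixture_excess[OF F' w])
    also have "\<dots> = ennreal (\<Sum>j<n. w j * excess (quantile (F j)) t)"
      using w q by (subst sum_ennreal[symmetric])
        (auto intro!: sum.cong simp: ennreal_mult nn_integral_eq_excess excess_nonneg)
    finally show ?thesis .
  qed
  show "(\<integral>\<^sup>+p. ennreal (t - quantile (\<lambda>x. \<Sum>j<n. w j * F j x) p) \<partial>uniform01)
      = ennreal (\<Sum>j<n. w j * shortfall (quantile (F j)) t)"
  proof -
    have "(\<integral>\<^sup>+p. ennreal (t - quantile (\<lambda>x. \<Sum>j<n. w j * F j x) p) \<partial>uniform01)
        = (\<Sum>j<n. ennreal (w j) * (\<integral>\<^sup>+p. ennreal (t - quantile (F j) p) \<partial>uniform01))"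
      by (rule nn_integral_quantile_mixture_shortfall[OF F' w])
    also have "\<dots> = ennreal (\<Sum>j<n. w j * shortfall (quantile (F j)) t)"
      using w q by (subst sum_ennreal[symmetric])
        (auto intro!: sum.cong simp: ennreal_mult nn_integral_eq_shortfall shortfall_nonneg)
    finally show ?thesis .
  qed
qed

lemma integrable_quantile_mixture:
  fixes F :: "nat \<Rightarrow> real \<Rightarrow> real"
  assumes F: "\<And>j. j < n \<Longrightarrow> F j \<in> M1" and w: "\<And>j. j < n \<Longrightarrow> 0 \<le> w j" "(\<Sum>j<n. w j) = 1"
  shows "integrable uniform01 (quantile (\<lambda>x. \<Sum>j<n. w j * F j x))"
proof (rule integrableI_bounded)
  let ?r = "quantile (\<lambda>x. \<Sum>j<n. w j * F j x)"
  show "?r \<in> borel_measurable uniform01"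
    using F w by (intro borel_measurable_quantile is_cdf_mixture) (auto simp: M1_def)
  then have "(\<integral>\<^sup>+p. ennreal (norm (?r p)) \<partial>uniform01)
      = (\<integral>\<^sup>+p. ennreal (?r p - 0) \<partial>uniform01) + (\<integral>\<^sup>+p. ennreal (0 - ?r p) \<partial>uniform01)"
    by (subst nn_integral_add[symmetric]) (auto intro!: nn_integral_cong simp: abs_real_def ennreal_neg)
  then show "(\<integral>\<^sup>+p. ennreal (norm (?r p)) \<partial>uniform01) < \<infinity>"
    using nn_integral_quantile_mixture_excess_eq[where F=F and w=w and t=0, OF F w]
      nn_integral_quantile_mixture_shortfall_eq[where F=F and w=w and t=0, OF F w]
    by simp
qed

lemma
  fixes F :: "nat \<Rightarrow> real \<Rightarrow> real"
  assumes F: "\<And>j. j < n \<Longrightarrow> F j \<in> M1" and w: "\<And>j. j < n \<Longrightarrow> 0 \<le> w j" "(\<Sum>j<n. w j) = 1"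
  shows excess_quantile_mixture:
      "excess (quantile (\<lambda>x. \<Sum>j<n. w j * F j x)) t = (\<Sum>j<n. w j * excess (quantile (F j)) t)"
    and shortfall_quantile_mixture:
      "shortfall (quantile (\<lambda>x. \<Sum>j<n. w j * F j x)) t = (\<Sum>j<n. w j * shortfall (quantile (F j)) t)"
proof -
  have "0 \<le> (\<Sum>j<n. w j * excess (quantile (F j)) t)" "0 \<le> (\<Sum>j<n. w j * shortfall (quantile (F j)) t)"
    using w by (auto intro!: sum_nonneg mult_nonneg_nonneg excess_nonneg shortfall_nonneg)
  then show "excess (quantile (\<lambda>x. \<Sum>j<n. w j * F j x)) t = (\<Sum>j<n. w j * excess (quantile (F j)) t)"
    and "shortfall (quantile (\<lambda>x. \<Sum>j<n. w j * F j x)) t = (\<Sum>j<n. w j * shortfall (quantile (F j)) t)"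
    using nn_integral_quantile_mixture_excess_eq[where F=F and w=w and t=t, OF F w]
      nn_integral_quantile_mixture_shortfall_eq[where F=F and w=w and t=t, OF F w]
      nn_integral_eq_excess[OF integrable_quantile_mixture[where F=F and w=w, OF F w]]
      nn_integral_eq_shortfall[OF integrable_quantile_mixture[where F=F and w=w, OF F w]]
      excess_nonneg shortfall_nonneg
    by simp_all
qed

lemma integral_quantile_mixture:
  fixes F :: "nat \<Rightarrow> real \<Rightarrow> real"
  assumes F: "\<And>j. j < n \<Longrightarrow> F j \<in> M1" and w: "\<And>j. j < n \<Longrightarrow> 0 \<le> w j" "(\<Sum>j<n. w j) = 1"
  shows "(\<integral>p. quantile (\<lambda>x. \<Sum>j<n. w j * F j x) p \<partial>uniform01)
       = (\<Sum>j<n. w j * (\<integral>p. quantile (F j) p \<partial>uniform01))"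
  using F integrable_quantile
  by (simp add: integral_eq_excess_shortfall[of _ 0] integrable_quantile_mixture[where F=F and w=w, OF F w]
      excess_quantile_mixture[where F=F and w=w, OF F w] shortfall_quantile_mixture[where F=F and w=w, OF F w]
      sum_subtractf right_diff_distrib)

definition tail_integral :: "(real \<Rightarrow> real) \<Rightarrow> real \<Rightarrow> real" where
  "tail_integral q s = (\<integral>p. indicator {s<..<1} p * q p \<partial>uniform01)"

lemma integrable_indicator_mult:
  fixes q :: "real \<Rightarrow> real"
  assumes q: "integrable uniform01 q"
  shows "integrable uniform01 (\<lambda>p. indicator {s<..<1} p * q p)"
proof (rule Bochner_Integration.integrable_bound[OF q])
  show "(\<lambda>p. indicator {s<..<1} p * q p) \<in> borel_measurable uniform01"
    using borel_measurable_integrable[OF q] borel_measurable_uniform01[of "indicator {s<..<1}"]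
    by (intro borel_measurable_times) auto
qed (auto split: split_indicator)

lemma tail_integral_const:
  assumes "0 \<le> s" "s < 1"
  shows "tail_integral (\<lambda>_. c) s = (1 - s) * c"
proof -
  have "{s<..<1} \<subseteq> {0<..<1}" using assms by auto
  then have "measure uniform01 {s<..<1} = 1 - s"
    using assms emeasure_uniform01[of "{s<..<1}"] by (simp add: measure_def)
  then show ?thesis using assms by (simp add: tail_integral_def Int_absorb2)
qed

lemma tail_integral_le_excess:
  assumes q: "integrable uniform01 q" and s: "0 \<le> s" "s < 1"
  shows "tail_integral q s \<le> (1 - s) * t + excess q t"
proof -
  have "tail_integral q s \<le> (\<integral>p. indicator {s<..<1} p * t + max 0 (q p - t) \<partial>uniform01)"
    unfolding tail_integral_def
    using q integrable_indicator_mult[OF q] integrable_indicator_mult[of "\<lambda>_. t"]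
    by (intro integral_mono) (auto split: split_indicator)
  also have "\<dots> = tail_integral (\<lambda>_. t) s + excess q t"
    unfolding tail_integral_def excess_def
    using q integrable_indicator_mult[of "\<lambda>_. t"] by (intro Bochner_Integration.integral_add) auto
  finally show ?thesis using tail_integral_const[OF s] by simp
qed

lemma tail_integral_eq_excess:
  assumes q: "integrable uniform01 q" and m: "mono_on {0<..<1} q" and s: "0 < s" "s < 1"
  shows "tail_integral q s = (1 - s) * q s + excess q (q s)"
proof -
  have "indicator {s<..<1} p * q p = indicator {s<..<1} p * q s + max 0 (q p - q s)"
    if "p \<in> space uniform01" for p
    using that s mono_onD[OF m, of s p] mono_onD[OF m, of p s] by (cases "s < p") auto
  then have "tail_integral q s = (\<integral>p. indicator {s<..<1} p * q s + max 0 (q p - q s) \<partial>uniform01)"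
    unfolding tail_integral_def by (intro Bochner_Integration.integral_cong) auto
  also have "\<dots> = tail_integral (\<lambda>_. q s) s + excess q (q s)"
    unfolding tail_integral_def excess_def
    using q integrable_indicator_mult[of "\<lambda>_. q s"] by (intro Bochner_Integration.integral_add) auto
  finally show ?thesis using tail_integral_const s by simp
qed

lemma tail_integral_sum:
  assumes "\<And>i. i \<in> I \<Longrightarrow> integrable uniform01 (h i)"
  shows "tail_integral (\<lambda>p. \<Sum>i\<in>I. h i p) s = (\<Sum>i\<in>I. tail_integral (h i) s)"
  unfolding tail_integral_def sum_distrib_left
  by (rule Bochner_Integration.integral_sum) (rule integrable_indicator_mult[OF assms])

lemma tail_integral_quantile_mixture:
  fixes F :: "nat \<Rightarrow> real \<Rightarrow> real"
  assumes F: "\<And>j. j < n \<Longrightarrow> F j \<in> M1" and w: "\<And>j. j < n \<Longrightarrow> 0 \<le> w j" "(\<Sum>j<n. w j) = 1"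
    and s: "0 < s" "s < 1"
  shows "(\<Sum>j<n. w j * tail_integral (quantile (F j)) s)
       \<le> tail_integral (quantile (\<lambda>x. \<Sum>j<n. w j * F j x)) s"
proof -
  let ?H = "\<lambda>x. \<Sum>j<n. w j * F j x"
  \<comment> \<open>The bound of \<open>tail_integral_le_excess\<close> is attained at the quantile, and for fixed \<open>t\<close>
     it is linear in the cdf.\<close>
  define t where "t = quantile ?H s"
  have "(\<Sum>j<n. w j * tail_integral (quantile (F j)) s) \<le> (\<Sum>j<n. w j * ((1 - s) * t + excess (quantile (F j)) t))"
    using s w F integrable_quantile by (intro sum_mono mult_left_mono tail_integral_le_excess) auto
  also have "\<dots> = (1 - s) * t + (\<Sum>j<n. w j * excess (quantile (F j)) t)"
    using w(2) by (simp add: distrib_left sum.distrib flip: sum_distrib_right)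
  also have "\<dots> = (1 - s) * t + excess (quantile ?H) t"
    using excess_quantile_mixture[OF F w] by simp
  also have "\<dots> = tail_integral (quantile ?H) s"
    unfolding t_def using F w s M1_def
    by (intro tail_integral_eq_excess[symmetric] integrable_quantile_mixture mono_on_quantile is_cdf_mixture) auto
  finally show ?thesis .
qed

definition majorized :: "(real \<Rightarrow> real) \<Rightarrow> (real \<Rightarrow> real) \<Rightarrow> bool" where
  "majorized f g \<longleftrightarrow> integrable uniform01 f \<and> integrable uniform01 g
     \<and> (\<integral>p. f p \<partial>uniform01) = (\<integral>p. g p \<partial>uniform01)
     \<and> (\<forall>s\<in>{0<..<1}. tail_integral f s \<le> tail_integral g s)"

lemma sum_doubly_stochastic:
  assumes "doubly_stochastic n L"
  shows "(\<Sum>i<n. \<Sum>j<n. L i j * x j) = (\<Sum>j<n. x j)"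
proof -
  have "(\<Sum>i<n. \<Sum>j<n. L i j * x j) = (\<Sum>j<n. (\<Sum>i<n. L i j) * x j)"
    by (subst sum.swap) (simp add: sum_distrib_right)
  then show ?thesis using assms by (simp add: doubly_stochastic_def)
qed

lemma majorized_quantile_sum_mat_mix:
  assumes F: "\<And>j. j < n \<Longrightarrow> F j \<in> M1" and L: "doubly_stochastic n L"
  shows "majorized (\<lambda>p. \<Sum>j<n. quantile (F j) p) (\<lambda>p. \<Sum>i<n. quantile (mat_mix n L F i) p)"
proof -
  have w: "\<And>j. j < n \<Longrightarrow> 0 \<le> L i j" "(\<Sum>j<n. L i j) = 1" if "i < n" for i
    using L that by (auto simp: doubly_stochastic_def)
  have mix: "mat_mix n L F i = (\<lambda>x. \<Sum>j<n. L i j * F j x)" for i by (simp add: mat_mix_def)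
  have qi: "integrable uniform01 (quantile (F j))" if "j < n" for j
    using F[OF that] by (rule integrable_quantile)
  have ri: "integrable uniform01 (quantile (mat_mix n L F i))" if "i < n" for i
    unfolding mix by (rule integrable_quantile_mixture[OF F w[OF that]])
  have "(\<integral>p. (\<Sum>j<n. quantile (F j) p) \<partial>uniform01) = (\<Sum>j<n. \<integral>p. quantile (F j) p \<partial>uniform01)"
    using qi by (intro Bochner_Integration.integral_sum) auto
  also have "\<dots> = (\<Sum>i<n. \<Sum>j<n. L i j * (\<integral>p. quantile (F j) p \<partial>uniform01))"
    by (rule sum_doubly_stochastic[symmetric, OF L])
  also have "\<dots> = (\<Sum>i<n. \<integral>p. quantile (mat_mix n L F i) p \<partial>uniform01)"
    unfolding mix using integral_quantile_mixture[OF F w] by simp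
  also have "\<dots> = (\<integral>p. (\<Sum>i<n. quantile (mat_mix n L F i) p) \<partial>uniform01)"
    using ri by (intro Bochner_Integration.integral_sum[symmetric]) auto
  finally have mean: "(\<integral>p. (\<Sum>j<n. quantile (F j) p) \<partial>uniform01)
      = (\<integral>p. (\<Sum>i<n. quantile (mat_mix n L F i) p) \<partial>uniform01)" .
  have "tail_integral (\<lambda>p. \<Sum>j<n. quantile (F j) p) s
      \<le> tail_integral (\<lambda>p. \<Sum>i<n. quantile (mat_mix n L F i) p) s" if s: "0 < s" "s < 1" for s
  proof -
    have "tail_integral (\<lambda>p. \<Sum>j<n. quantile (F j) p) s = (\<Sum>j<n. tail_integral (quantile (F j)) s)"
      using qi by (intro tail_integral_sum) auto
    also have "\<dots> = (\<Sum>i<n. \<Sum>j<n. L i j * tail_integral (quantile (F j)) s)"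
      by (rule sum_doubly_stochastic[symmetric, OF L])
    also have "\<dots> \<le> (\<Sum>i<n. tail_integral (quantile (mat_mix n L F i)) s)"
    proof (rule sum_mono)
      fix i assume "i \<in> {..<n}"
      then have "i < n" by simp
      show "(\<Sum>j<n. L i j * tail_integral (quantile (F j)) s) \<le> tail_integral (quantile (mat_mix n L F i)) s"
        unfolding mix by (rule tail_integral_quantile_mixture[OF F w[OF \<open>i < n\<close>] s])
    qed
    also have "\<dots> = tail_integral (\<lambda>p. \<Sum>i<n. quantile (mat_mix n L F i) p) s"
      using ri by (intro tail_integral_sum[symmetric]) auto
    finally show ?thesis .
  qed
  then show ?thesis
    using qi ri mean by (auto simp: majorized_def)
qed

lemma tail_integral_0: "integrable uniform01 q \<Longrightarrow> tail_integral q 0 = (\<integral>p. q p \<partial>uniform01)"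
  unfolding tail_integral_def by (intro Bochner_Integration.integral_cong) auto

lemma tail_integral_diff:
  "integrable uniform01 f \<Longrightarrow> integrable uniform01 g
    \<Longrightarrow> tail_integral (\<lambda>p. g p - f p) s = tail_integral g s - tail_integral f s"
  unfolding tail_integral_def right_diff_distrib
  by (intro Bochner_Integration.integral_diff integrable_indicator_mult)

lemma tail_integral_diff_nonneg:
  assumes "majorized f g" "0 \<le> s" "s < 1"
  shows "0 \<le> tail_integral (\<lambda>p. g p - f p) s"
  using assms tail_integral_diff[of f g s] tail_integral_0[of "\<lambda>p. g p - f p"]
  by (cases "s = 0") (auto simp: majorized_def)

lemma upper_set_ae_eq_Ioo:
  assumes U: "U \<subseteq> {0<..<1}" "U \<noteq> {}" and up: "\<And>p p'. p \<in> U \<Longrightarrow> p \<le> p' \<Longrightarrow> p' < 1 \<Longrightarrow> p' \<in> U"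
  obtains s where "0 \<le> s" "s < 1" "AE p in uniform01. indicator U p = (indicator {s<..<1} p :: real)"
proof
  have bdd: "bdd_below U" using U by (auto intro!: bdd_belowI[of _ 0])
  obtain u where u: "u \<in> U" using U by blast
  show nonneg: "0 \<le> Inf U" using U by (intro cInf_greatest) auto
  show "Inf U < 1" using cInf_lower[OF u bdd] u U by auto
  have above: "p \<in> U" if p: "Inf U < p" "p < 1" for p
  proof -
    obtain u where "u \<in> U" "u < p" using cInf_lessD[OF U(2) p(1)] by blast
    then show ?thesis using up[of u p] p(2) by simp
  qed
  have below: "Inf U < p" if "p \<in> U" "p \<noteq> Inf U" for p
    using cInf_lower[OF that(1) bdd] that(2) by simp
  have "AE p in uniform01. p \<noteq> Inf U"
    unfolding uniform01_def
    by (subst AE_restrict_space_iff) (auto intro: AE_mp[OF AE_lborel_singleton[of "Inf U"]])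
  then show "AE p in uniform01. indicator U p = (indicator {Inf U<..<1} p :: real)"
  proof eventually_elim
    case (elim p)
    then show ?case using above below U(1) nonneg by (auto simp: indicator_def)
  qed
qed

lemma integral_upper_set_nonneg:
  fixes d :: "real \<Rightarrow> real"
  assumes d: "integrable uniform01 d" and tl: "\<And>s. 0 \<le> s \<Longrightarrow> s < 1 \<Longrightarrow> 0 \<le> tail_integral d s"
    and U: "U \<in> sets uniform01" and up: "\<And>p p'. p \<in> U \<Longrightarrow> p \<le> p' \<Longrightarrow> p' < 1 \<Longrightarrow> p' \<in> U"
  shows "0 \<le> (\<integral>p. indicator U p * d p \<partial>uniform01)"
proof (cases "U = {}")
  case False
  have sub: "U \<subseteq> {0<..<1}" using sets.sets_into_space[OF U] by simp
  obtain s where s: "0 \<le> s" "s < 1" "AE p in uniform01. indicator U p = (indicator {s<..<1} p :: real)"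
    by (rule upper_set_ae_eq_Ioo[OF sub False up])
  have "(\<integral>p. indicator U p * d p \<partial>uniform01) = tail_integral d s"
    unfolding tail_integral_def
  proof (rule integral_cong_AE)
    show "AE p in uniform01. indicator U p * d p = indicator {s<..<1} p * d p"
      using s(3) by eventually_elim simp
    show "(\<lambda>p. indicator {s<..<1} p * d p) \<in> borel_measurable uniform01"
      using borel_measurable_integrable[OF integrable_indicator_mult[OF d, of s]] .
    show "(\<lambda>p. indicator U p * d p) \<in> borel_measurable uniform01"
      using borel_measurable_integrable[OF integrable_real_mult_indicator[OF U d]] by (simp add: mult.commute)
  qed
  then show ?thesis using tl[OF s(1,2)] by simp
qed simp

lemma integrable_bounded_mult:
  fixes g f :: "'a \<Rightarrow> real"
  assumes [measurable]: "g \<in> borel_measurable M" and B: "\<And>x. x \<in> space M \<Longrightarrow> \<bar>g x\<bar> \<le> B"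
    and f: "integrable M f"
  shows "integrable M (\<lambda>x. g x * f x)"
proof (rule Bochner_Integration.integrable_bound)
  show "integrable M (\<lambda>x. B * \<bar>f x\<bar>)" using f by auto
  show "(\<lambda>x. g x * f x) \<in> borel_measurable M" using borel_measurable_integrable[OF f] by measurable
  show "AE x in M. norm (g x * f x) \<le> norm (B * \<bar>f x\<bar>)"
  proof (rule AE_I2)
    fix x assume x: "x \<in> space M"
    then have "\<bar>g x\<bar> * \<bar>f x\<bar> \<le> B * \<bar>f x\<bar>" using B by (intro mult_right_mono) auto
    then show "norm (g x * f x) \<le> norm (B * \<bar>f x\<bar>)" using B[OF x] by (simp add: abs_mult)
  qed
qed

(* ennreal truncates at 0: the two sides integrate the negative and the positive part of d over U. *)
lemma nn_integral_upper_set_le: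
  fixes d :: "real \<Rightarrow> real"
  assumes d: "integrable uniform01 d" and tl: "\<And>s. 0 \<le> s \<Longrightarrow> s < 1 \<Longrightarrow> 0 \<le> tail_integral d s"
    and U: "U \<in> sets uniform01" and up: "\<And>p p'. p \<in> U \<Longrightarrow> p \<le> p' \<Longrightarrow> p' < 1 \<Longrightarrow> p' \<in> U"
  shows "(\<integral>\<^sup>+p. indicator U p * ennreal (- d p) \<partial>uniform01) \<le> (\<integral>\<^sup>+p. indicator U p * ennreal (d p) \<partial>uniform01)"
proof -
  have iU: "integrable uniform01 (\<lambda>p. indicator U p * max 0 (e p))" if "integrable uniform01 e"
    for e :: "real \<Rightarrow> real"
    using integrable_real_mult_indicator[OF U integrable_max[OF that integrable_zero]]
    by (simp add: mult.commute max.commute)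
  have real: "(\<integral>\<^sup>+p. indicator U p * ennreal (e p) \<partial>uniform01) = ennreal (\<integral>p. indicator U p * max 0 (e p) \<partial>uniform01)"
    if "integrable uniform01 e" for e
    using that by (subst nn_integral_eq_integral[symmetric])
      (auto intro!: nn_integral_cong iU simp: ennreal_max_0 split: split_indicator)
  have "0 \<le> (\<integral>p. indicator U p * d p \<partial>uniform01)" by (rule integral_upper_set_nonneg[OF d tl U up])
  also have "\<dots> = (\<integral>p. indicator U p * max 0 (d p) - indicator U p * max 0 (- d p) \<partial>uniform01)"
    by (intro Bochner_Integration.integral_cong) (auto simp: indicator_def)
  also have "\<dots> = (\<integral>p. indicator U p * max 0 (d p) \<partial>uniform01) - (\<integral>p. indicator U p * max 0 (- d p) \<partial>uniform01)"
    using d by (intro Bochner_Integration.integral_diff iU) auto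
  finally show ?thesis using d by (simp add: real ennreal_leI)
qed

lemma nn_integral_mono_weight_le:
  fixes W d :: "real \<Rightarrow> real"
  assumes d: "integrable uniform01 d" and tl: "\<And>s. 0 \<le> s \<Longrightarrow> s < 1 \<Longrightarrow> 0 \<le> tail_integral d s"
    and W: "mono_on {0<..<1} W"
  shows "(\<integral>\<^sup>+p. ennreal (W p) * ennreal (- d p) \<partial>uniform01) \<le> (\<integral>\<^sup>+p. ennreal (W p) * ennreal (d p) \<partial>uniform01)"
proof -
  note Wm[measurable] = borel_measurable_uniform01_mono_on[OF W]
  note dm[measurable] = borel_measurable_integrable[OF d]
  \<comment> \<open>Layer cake: every level set \<open>{p. y < W p}\<close> of the monotone weight is an upper set.\<close>
  let ?U = "\<lambda>y. {p \<in> space uniform01. 0 \<le> y \<and> y < W p}"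
  have layer: "(\<integral>\<^sup>+p. ennreal (W p) * e p \<partial>uniform01) = (\<integral>\<^sup>+y. \<integral>\<^sup>+p. indicator (?U y) p * e p \<partial>uniform01 \<partial>lborel)"
    if "e \<in> borel_measurable uniform01" for e
    using nn_integral_layer_cake[OF uniform01.sigma_finite_measure_axioms borel_measurable_const[of 0] Wm that]
    by simp
  have "(\<integral>\<^sup>+p. indicator (?U y) p * ennreal (- d p) \<partial>uniform01) \<le> (\<integral>\<^sup>+p. indicator (?U y) p * ennreal (d p) \<partial>uniform01)"
    for y
  proof (rule nn_integral_upper_set_le[OF d tl])
    show "?U y \<in> sets uniform01" by measurable
  next
    fix p p' assume "p \<in> ?U y" "p \<le> p'" "p' < 1"
    then show "p' \<in> ?U y" using mono_onD[OF W, of p p'] by auto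
  qed
  then show ?thesis by (simp add: layer nn_integral_mono)
qed

lemma integral_weight_nonneg:
  fixes W d :: "real \<Rightarrow> real"
  assumes d: "integrable uniform01 d" and tl: "\<And>s. 0 \<le> s \<Longrightarrow> s < 1 \<Longrightarrow> 0 \<le> tail_integral d s"
    and W: "mono_on {0<..<1} W" "\<And>p. 0 < p \<Longrightarrow> p < 1 \<Longrightarrow> 0 \<le> W p"
    and B: "\<And>p. 0 < p \<Longrightarrow> p < 1 \<Longrightarrow> W p \<le> B"
  shows "0 \<le> (\<integral>p. W p * d p \<partial>uniform01)"
proof -
  note [measurable] = borel_measurable_uniform01_mono_on[OF W(1)] borel_measurable_integrable[OF d]
  have iW: "integrable uniform01 (\<lambda>p. W p * max 0 (e p))" if "integrable uniform01 e" for e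
    using W(2) B by (intro integrable_bounded_mult[where B=B] integrable_max that) auto
  have real: "(\<integral>\<^sup>+p. ennreal (W p) * ennreal (e p) \<partial>uniform01) = ennreal (\<integral>p. W p * max 0 (e p) \<partial>uniform01)"
    if "integrable uniform01 e" for e
    using that iW W(2) by (subst nn_integral_eq_integral[symmetric])
      (auto intro!: nn_integral_cong simp: ennreal_mult ennreal_max_0)
  have "0 \<le> (\<integral>p. W p * max 0 (d p) \<partial>uniform01)"
    using W(2) by (intro integral_nonneg_AE AE_I2) simp
  moreover have "ennreal (\<integral>p. W p * max 0 (- d p) \<partial>uniform01) \<le> ennreal (\<integral>p. W p * max 0 (d p) \<partial>uniform01)"
    using nn_integral_mono_weight_le[OF d tl W(1)] d by (simp add: real)
  ultimately have "(\<integral>p. W p * max 0 (- d p) \<partial>uniform01) \<le> (\<integral>p. W p * max 0 (d p) \<partial>uniform01)"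
    by (simp add: ennreal_le_iff)
  moreover have "(\<integral>p. W p * d p \<partial>uniform01) = (\<integral>p. W p * max 0 (d p) - W p * max 0 (- d p) \<partial>uniform01)"
    by (intro Bochner_Integration.integral_cong) (auto simp: max_def algebra_simps)
  moreover have "\<dots> = (\<integral>p. W p * max 0 (d p) \<partial>uniform01) - (\<integral>p. W p * max 0 (- d p) \<partial>uniform01)"
    using d by (intro Bochner_Integration.integral_diff iW) auto
  ultimately show ?thesis by simp
qed

lemma integral_mono_weight_majorized:
  fixes H :: "real \<Rightarrow> real"
  assumes maj: "majorized f g" and H: "mono_on {0<..<1} H" and B: "\<And>p. 0 < p \<Longrightarrow> p < 1 \<Longrightarrow> \<bar>H p\<bar> \<le> B"
  shows "(\<integral>p. H p * f p \<partial>uniform01) \<le> (\<integral>p. H p * g p \<partial>uniform01)"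
proof -
  note [measurable] = borel_measurable_uniform01_mono_on[OF H]
  have f: "integrable uniform01 f" and g: "integrable uniform01 g"
    and mean: "(\<integral>p. g p - f p \<partial>uniform01) = 0"
    using maj by (auto simp: majorized_def)
  have HB: "0 \<le> H p + B" "H p + B \<le> 2 * B" if "0 < p" "p < 1" for p
    using B[OF that] by (auto simp: abs_le_iff)
  have "0 \<le> (\<integral>p. (H p + B) * (g p - f p) \<partial>uniform01)"
    using tail_integral_diff_nonneg[OF maj] f g HB
    by (intro integral_weight_nonneg[where B="2 * B"]) (auto intro!: mono_onI dest: mono_onD[OF H])
  also have "\<dots> = (\<integral>p. H p * g p \<partial>uniform01) - (\<integral>p. H p * f p \<partial>uniform01)"
    using f g mean B integrable_bounded_mult[of H uniform01 B]
    by (simp add: distrib_right right_diff_distrib Bochner_Integration.integral_diff)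
  finally show ?thesis by simp
qed

definition slope :: "(real \<Rightarrow> real) \<Rightarrow> real \<Rightarrow> real \<Rightarrow> real" where
  "slope \<phi> a b = (\<phi> b - \<phi> a) / (b - a)"

definition right_slope :: "(real \<Rightarrow> real) \<Rightarrow> real \<Rightarrow> real" where
  "right_slope \<phi> x = Inf (slope \<phi> x ` {x<..})"

lemma convex_slope_le:
  assumes "convex_on UNIV \<phi>" "a < b" "b < c"
  shows "slope \<phi> a b \<le> slope \<phi> a c" and "slope \<phi> a c \<le> slope \<phi> b c"
proof -
  have swap: "(p - q) / (r - s) = (q - p) / (s - r)" for p q r s :: real
    by (metis minus_diff_eq minus_divide_divide)
  show "slope \<phi> a b \<le> slope \<phi> a c" "slope \<phi> a c \<le> slope \<phi> b c"
    using convex_on_slope_le[OF assms(1), of a c b] assms by (auto simp: slope_def swap)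
qed

context
  fixes \<phi> :: "real \<Rightarrow> real"
  assumes convex: "convex_on UNIV \<phi>"
begin

lemma bdd_below_slopes: "bdd_below (slope \<phi> x ` {x<..})"
proof (rule bdd_belowI)
  fix z assume "z \<in> slope \<phi> x ` {x<..}"
  then obtain y where "x < y" "z = slope \<phi> x y" by auto
  then show "slope \<phi> (x - 1) x \<le> z"
    using convex_slope_le[OF convex, of "x - 1" x y] by linarith
qed

lemma right_slope_le_slope: "x < y \<Longrightarrow> right_slope \<phi> x \<le> slope \<phi> x y"
  unfolding right_slope_def by (rule cInf_lower[OF _ bdd_below_slopes]) auto

lemma slope_le_right_slope:
  assumes "y < x"
  shows "slope \<phi> y x \<le> right_slope \<phi> x"
  unfolding right_slope_def
proof (rule cInf_greatest)
  fix z assume "z \<in> slope \<phi> x ` {x<..}"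
  then obtain w where "x < w" "z = slope \<phi> x w" by auto
  then show "slope \<phi> y x \<le> z"
    using convex_slope_le[OF convex, of y x w] assms by linarith
qed auto

lemma convex_ge_tangent: "\<phi> x + right_slope \<phi> x * (z - x) \<le> \<phi> z"
proof (cases z x rule: linorder_cases)
  case less
  then have "(\<phi> x - \<phi> z) / (x - z) \<le> right_slope \<phi> x"
    using slope_le_right_slope by (simp add: slope_def)
  then show ?thesis using less by (simp add: pos_divide_le_eq algebra_simps)
next
  case greater
  then have "right_slope \<phi> x \<le> (\<phi> z - \<phi> x) / (z - x)"
    using right_slope_le_slope by (simp add: slope_def)
  then show ?thesis using greater by (simp add: pos_le_divide_eq algebra_simps)
qed simp

lemma right_slope_mono: "x \<le> x' \<Longrightarrow> right_slope \<phi> x \<le> right_slope \<phi> x'"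
  using right_slope_le_slope[of x x'] slope_le_right_slope[of x x'] by (cases "x = x'") auto

lemma borel_measurable_right_slope [measurable]: "right_slope \<phi> \<in> borel_measurable borel"
  by (rule borel_measurable_mono) (auto intro: monoI right_slope_mono)

lemma borel_measurable_convex [measurable]: "\<phi> \<in> borel_measurable borel"
  by (rule borel_measurable_continuous_onI) (rule convex_on_continuous[OF open_UNIV convex])

end

definition clip :: "real \<Rightarrow> real \<Rightarrow> real" where
  "clip M y = max (- M) (min M y)"

definition affine_outside :: "(real \<Rightarrow> real) \<Rightarrow> real \<Rightarrow> real \<Rightarrow> real" where
  "affine_outside \<phi> M y = \<phi> (clip M y) + right_slope \<phi> (clip M y) * (y - clip M y)"

lemma clip_bounds: "0 \<le> M \<Longrightarrow> - M \<le> clip M y \<and> clip M y \<le> M"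
  by (simp add: clip_def)

lemma clip_mono: "y \<le> y' \<Longrightarrow> clip M y \<le> clip M y'"
  by (simp add: clip_def)

context
  fixes \<phi> :: "real \<Rightarrow> real"
  assumes convex: "convex_on UNIV \<phi>"
begin

lemma borel_measurable_affine_outside [measurable]: "affine_outside \<phi> M \<in> borel_measurable borel"
  using convex unfolding affine_outside_def clip_def by measurable

lemma affine_outside_ge_tangent:
  assumes "- M \<le> x" "x \<le> M"
  shows "\<phi> x + right_slope \<phi> x * (z - x) \<le> affine_outside \<phi> M z"
proof -
  consider "z < - M" | "- M \<le> z" "z \<le> M" | "M < z" by linarith
  then show ?thesis
  proof cases
    case 1
    then have "right_slope \<phi> x * (z + M) \<le> right_slope \<phi> (- M) * (z + M)"
      using assms by (intro mult_right_mono_neg right_slope_mono[OF convex]) auto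
    then show ?thesis
      using 1 assms convex_ge_tangent[OF convex, of x "- M"]
      by (simp add: affine_outside_def clip_def algebra_simps)
  next
    case 2
    then show ?thesis
      using convex_ge_tangent[OF convex, of x z] by (simp add: affine_outside_def clip_def)
  next
    case 3
    then have "right_slope \<phi> x * (z - M) \<le> right_slope \<phi> M * (z - M)"
      using assms by (intro mult_right_mono right_slope_mono[OF convex]) auto
    then show ?thesis
      using 3 assms convex_ge_tangent[OF convex, of x M]
      by (simp add: affine_outside_def clip_def algebra_simps)
  qed
qed

lemma affine_outside_supgradient:
  "0 \<le> M \<Longrightarrow> affine_outside \<phi> M y + right_slope \<phi> (clip M y) * (z - y) \<le> affine_outside \<phi> M z"
  using affine_outside_ge_tangent[of M "clip M y" z] clip_bounds[of M y]
  by (simp add: affine_outside_def algebra_simps)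

lemma affine_outside_le: "affine_outside \<phi> M y \<le> \<phi> y"
  unfolding affine_outside_def by (rule convex_ge_tangent[OF convex])

lemma affine_outside_eq: "\<bar>y\<bar> \<le> M \<Longrightarrow> affine_outside \<phi> M y = \<phi> y"
  by (simp add: affine_outside_def clip_def)

lemma affine_outside_mono: "0 \<le> M \<Longrightarrow> M \<le> M' \<Longrightarrow> affine_outside \<phi> M y \<le> affine_outside \<phi> M' y"
  using affine_outside_ge_tangent[of M' "clip M y" y] clip_bounds[of M y]
  by (simp add: affine_outside_def)

lemma affine_outside_linear_bound:
  assumes "0 \<le> M"
  obtains K1 K2 where "\<And>y. \<bar>affine_outside \<phi> M y\<bar> \<le> K1 + K2 * \<bar>y\<bar>"
proof -
  have "continuous_on {- M..M} \<phi>"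
    using convex_on_continuous[OF open_UNIV convex] by (rule continuous_on_subset) simp
  then have "bounded (\<phi> ` {- M..M})"
    by (intro compact_imp_bounded compact_continuous_image compact_Icc)
  then obtain K where K: "\<And>x. x \<in> {- M..M} \<Longrightarrow> \<bar>\<phi> x\<bar> \<le> K"
    unfolding bounded_real by blast
  define S where "S = \<bar>right_slope \<phi> (- M)\<bar> + \<bar>right_slope \<phi> M\<bar>"
  have "\<bar>affine_outside \<phi> M y\<bar> \<le> (K + S * M) + S * \<bar>y\<bar>" for y
  proof -
    let ?c = "clip M y"
    have c: "- M \<le> ?c" "?c \<le> M" using clip_bounds[OF assms] by auto
    have "right_slope \<phi> (- M) \<le> right_slope \<phi> ?c" "right_slope \<phi> ?c \<le> right_slope \<phi> M"
      using c by (auto intro: right_slope_mono[OF convex])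
    then have "\<bar>right_slope \<phi> ?c\<bar> \<le> S" by (auto simp: S_def)
    moreover have "\<bar>y - ?c\<bar> \<le> \<bar>y\<bar> + M" using c by auto
    ultimately have "\<bar>right_slope \<phi> ?c * (y - ?c)\<bar> \<le> S * (\<bar>y\<bar> + M)"
      unfolding abs_mult by (intro mult_mono) (auto simp: S_def)
    then show ?thesis using K[of ?c] c by (simp add: affine_outside_def algebra_simps)
  qed
  then show ?thesis by (rule that)
qed

lemma integrable_affine_outside:
  assumes N: "finite_measure N" and "0 \<le> M" and h: "integrable N h"
  shows "integrable N (\<lambda>x. affine_outside \<phi> M (h x))"
proof -
  obtain K1 K2 where K: "\<And>y. \<bar>affine_outside \<phi> M y\<bar> \<le> K1 + K2 * \<bar>y\<bar>"
    using affine_outside_linear_bound[OF assms(2)] by blast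
  show ?thesis
  proof (rule Bochner_Integration.integrable_bound)
    show "integrable N (\<lambda>x. K1 + K2 * \<bar>h x\<bar>)" using N h by (simp add: finite_measure.integrable_const)
    show "(\<lambda>x. affine_outside \<phi> M (h x)) \<in> borel_measurable N"
      using borel_measurable_integrable[OF h] by measurable
    show "AE x in N. norm (affine_outside \<phi> M (h x)) \<le> norm (K1 + K2 * \<bar>h x\<bar>)"
      using K by (intro AE_I2) (metis abs_ge_self order_trans real_norm_def)
  qed
qed

end

lemma integral_affine_outside_mono:
  assumes convex: "convex_on UNIV \<phi>" and M: "0 \<le> M"
    and maj: "majorized f g" and f: "mono_on {0<..<1} f"
  shows "(\<integral>p. affine_outside \<phi> M (f p) \<partial>uniform01) \<le> (\<integral>p. affine_outside \<phi> M (g p) \<partial>uniform01)"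
proof -
  have fi: "integrable uniform01 f" and gi: "integrable uniform01 g"
    using maj by (auto simp: majorized_def)
  define H where "H p = right_slope \<phi> (clip M (f p))" for p
  have H: "mono_on {0<..<1} H"
    unfolding H_def by (intro mono_onI right_slope_mono[OF convex] clip_mono) (rule mono_onD[OF f])
  have HB: "\<bar>H p\<bar> \<le> \<bar>right_slope \<phi> (- M)\<bar> + \<bar>right_slope \<phi> M\<bar>" for p
    using right_slope_mono[OF convex, of "- M" "clip M (f p)"] right_slope_mono[OF convex, of "clip M (f p)" M]
      clip_bounds[OF M, of "f p"]
    by (auto simp: H_def)
  note [measurable] = borel_measurable_uniform01_mono_on[OF H]
  have iA: "integrable uniform01 (\<lambda>p. affine_outside \<phi> M (h p))" if "integrable uniform01 h" for h
    by (rule integrable_affine_outside[OF convex uniform01.finite_measure_axioms M that])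
  have iH: "integrable uniform01 (\<lambda>p. H p * h p)" if "integrable uniform01 h" for h
    using HB that by (intro integrable_bounded_mult) auto
  have "(\<integral>p. affine_outside \<phi> M (f p) \<partial>uniform01)
      \<le> (\<integral>p. affine_outside \<phi> M (f p) \<partial>uniform01) + ((\<integral>p. H p * g p \<partial>uniform01) - (\<integral>p. H p * f p \<partial>uniform01))"
    using integral_mono_weight_majorized[OF maj H, of "\<bar>right_slope \<phi> (- M)\<bar> + \<bar>right_slope \<phi> M\<bar>"] HB
    by simp
  also have "\<dots> = (\<integral>p. affine_outside \<phi> M (f p) + H p * (g p - f p) \<partial>uniform01)"
    using iA[OF fi] iH[OF fi] iH[OF gi] by (simp add: right_diff_distrib)
  also have "\<dots> \<le> (\<integral>p. affine_outside \<phi> M (g p) \<partial>uniform01)"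
    using iA[OF fi] iA[OF gi] iH[OF fi] iH[OF gi] affine_outside_supgradient[OF convex M]
    by (intro integral_mono) (auto simp: H_def right_diff_distrib)
  finally show ?thesis .
qed

definition ereal_integral :: "'a measure \<Rightarrow> ('a \<Rightarrow> real) \<Rightarrow> ereal" where
  "ereal_integral M h =
     enn2ereal (\<integral>\<^sup>+x. ennreal (max (h x) 0) \<partial>M) - enn2ereal (\<integral>\<^sup>+x. ennreal (max (- h x) 0) \<partial>M)"

lemma cdf_integral_eq_quantile:
  assumes G: "is_cdf G" and [measurable]: "\<phi> \<in> borel_measurable borel"
  shows "cdf_integral G \<phi> = ereal_integral uniform01 (\<lambda>p. \<phi> (quantile G p))"
  unfolding cdf_integral_def ereal_integral_def cdf_measure_eq_distr_quantile[OF G]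
  using borel_measurable_quantile[OF G] by (simp add: nn_integral_distr)

lemma ereal_integral_cong:
  "(\<And>x. x \<in> space M \<Longrightarrow> h x = h' x) \<Longrightarrow> ereal_integral M h = ereal_integral M h'"
  unfolding ereal_integral_def by (simp cong: nn_integral_cong)

lemma ereal_integral_integrable:
  assumes u: "integrable M u"
  shows "ereal_integral M u = ereal (\<integral>x. u x \<partial>M)"
proof -
  have "(\<integral>\<^sup>+x. ennreal (max (u x) 0) \<partial>M) = ennreal (\<integral>x. max (u x) 0 \<partial>M)"
    by (rule nn_integral_eq_integral) (use u in auto)
  moreover have "(\<integral>\<^sup>+x. ennreal (max (- u x) 0) \<partial>M) = ennreal (\<integral>x. max (- u x) 0 \<partial>M)"
    by (rule nn_integral_eq_integral) (use u in auto)
  moreover have "(\<integral>x. max (u x) 0 \<partial>M) - (\<integral>x. max (- u x) 0 \<partial>M) = (\<integral>x. max (u x) 0 - max (- u x) 0 \<partial>M)"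
    using u by (intro Bochner_Integration.integral_diff[symmetric]) auto
  moreover have "(\<integral>x. max (u x) 0 - max (- u x) 0 \<partial>M) = (\<integral>x. u x \<partial>M)"
    by (intro Bochner_Integration.integral_cong) auto
  ultimately show ?thesis
    unfolding ereal_integral_def by (simp add: integral_nonneg_AE)
qed

lemma ereal_integral_eq_nn_integral_add:
  fixes u v w :: "'a \<Rightarrow> real"
  assumes [measurable]: "u \<in> borel_measurable M" "w \<in> borel_measurable M" and v: "integrable M v"
    and uvw: "\<And>x. x \<in> space M \<Longrightarrow> u x = v x + w x" and w0: "\<And>x. x \<in> space M \<Longrightarrow> 0 \<le> w x"
  shows "ereal_integral M u = enn2ereal (\<integral>\<^sup>+x. ennreal (w x) \<partial>M) + ereal (\<integral>x. v x \<partial>M)"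
proof (cases "(\<integral>\<^sup>+x. ennreal (w x) \<partial>M) = \<top>")
  case True
  note [measurable] = borel_measurable_integrable[OF v]
  have "(\<integral>\<^sup>+x. ennreal (max (- u x) 0) \<partial>M) \<le> (\<integral>\<^sup>+x. ennreal \<bar>v x\<bar> \<partial>M)"
    using uvw w0 by (intro nn_integral_mono ennreal_leI) force
  then have neg: "(\<integral>\<^sup>+x. ennreal (max (- u x) 0) \<partial>M) \<noteq> \<top>"
    using v by (auto simp: integrable_iff_bounded top_unique)
  have "(\<integral>\<^sup>+x. ennreal (w x) \<partial>M) \<le> (\<integral>\<^sup>+x. ennreal (max (u x) 0) + ennreal \<bar>v x\<bar> \<partial>M)"
  proof (rule nn_integral_mono)
    fix x assume "x \<in> space M"
    then have "ennreal (w x) \<le> ennreal (max (u x) 0 + \<bar>v x\<bar>)" using uvw by (intro ennreal_leI) auto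
    then show "ennreal (w x) \<le> ennreal (max (u x) 0) + ennreal \<bar>v x\<bar>" by (simp add: ennreal_plus)
  qed
  also have "\<dots> = (\<integral>\<^sup>+x. ennreal (max (u x) 0) \<partial>M) + (\<integral>\<^sup>+x. ennreal \<bar>v x\<bar> \<partial>M)"
    by (rule nn_integral_add) auto
  finally have "(\<integral>\<^sup>+x. ennreal (max (u x) 0) \<partial>M) = \<top>"
    using True v by (auto simp: integrable_iff_bounded top_unique ennreal_add_eq_top)
  then show ?thesis using True neg by (simp add: ereal_integral_def)
next
  case False
  then have w: "integrable M w"
    using w0 by (intro integrableI_nonneg) (auto simp: less_top)
  have "integrable M u"
    using Bochner_Integration.integrable_cong[OF refl, of M u "\<lambda>x. v x + w x"] uvw
      Bochner_Integration.integrable_add[OF v w] by simp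
  then show ?thesis
    using v w w0 uvw
    by (simp add: ereal_integral_integrable nn_integral_eq_integral Bochner_Integration.integral_cong[of M M u "\<lambda>x. v x + w x"] integral_nonneg_AE)
qed

lemma nn_integral_convex_minus_tangent_SUP:
  fixes h :: "'a \<Rightarrow> real"
  assumes convex: "convex_on UNIV \<phi>" and N: "finite_measure N" and h: "integrable N h"
  shows "(\<integral>\<^sup>+x. ennreal (\<phi> (h x) - (\<phi> 0 + right_slope \<phi> 0 * h x)) \<partial>N)
       = (SUP m::nat. ennreal ((\<integral>x. affine_outside \<phi> m (h x) \<partial>N) - (\<integral>x. \<phi> 0 + right_slope \<phi> 0 * h x \<partial>N)))"
proof -
  interpret finite_measure N by (rule N)
  note [measurable] = borel_measurable_integrable[OF h] borel_measurable_convex[OF convex]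
    borel_measurable_affine_outside[OF convex]
  define l where "l x = \<phi> 0 + right_slope \<phi> 0 * h x" for x
  have l: "integrable N l" unfolding l_def using h by simp
  have tangent: "l x \<le> affine_outside \<phi> (real m) (h x)" for x m
    using affine_outside_ge_tangent[OF convex, of "real m" 0 "h x"] by (simp add: l_def)
  have "ennreal (\<phi> (h x) - l x) = (SUP m::nat. ennreal (affine_outside \<phi> m (h x) - l x))" for x
  proof (rule antisym)
    obtain m :: nat where "\<bar>h x\<bar> \<le> m" using real_arch_simple by blast
    then show "ennreal (\<phi> (h x) - l x) \<le> (SUP m::nat. ennreal (affine_outside \<phi> m (h x) - l x))"
      by (intro SUP_upper2[of m]) (simp_all add: affine_outside_eq[OF convex])
    show "(SUP m::nat. ennreal (affine_outside \<phi> m (h x) - l x)) \<le> ennreal (\<phi> (h x) - l x)"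
      by (intro SUP_least ennreal_leI) (simp add: affine_outside_le[OF convex])
  qed
  then have "(\<integral>\<^sup>+x. ennreal (\<phi> (h x) - l x) \<partial>N)
      = (SUP m::nat. \<integral>\<^sup>+x. ennreal (affine_outside \<phi> m (h x) - l x) \<partial>N)"
    by (simp only:) (rule nn_integral_monotone_convergence_SUP,
        auto simp: incseq_def le_fun_def l_def intro!: ennreal_leI affine_outside_mono[OF convex])
  also have "\<dots> = (SUP m::nat. ennreal ((\<integral>x. affine_outside \<phi> m (h x) \<partial>N) - (\<integral>x. l x \<partial>N)))"
  proof (rule SUP_cong[OF refl])
    fix m :: nat
    have A: "integrable N (\<lambda>x. affine_outside \<phi> m (h x))"
      by (rule integrable_affine_outside[OF convex N _ h]) simp
    have "(\<integral>\<^sup>+x. ennreal (affine_outside \<phi> m (h x) - l x) \<partial>N) = ennreal (\<integral>x. affine_outside \<phi> m (h x) - l x \<partial>N)"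
      using A l tangent by (intro nn_integral_eq_integral) auto
    then show "(\<integral>\<^sup>+x. ennreal (affine_outside \<phi> m (h x) - l x) \<partial>N)
        = ennreal ((\<integral>x. affine_outside \<phi> m (h x) \<partial>N) - (\<integral>x. l x \<partial>N))"
      using A l by simp
  qed
  finally show ?thesis unfolding l_def .
qed

lemma ereal_integral_convex_mono:
  assumes convex: "convex_on UNIV \<phi>" and maj: "majorized f g" and f: "mono_on {0<..<1} f"
  shows "ereal_integral uniform01 (\<lambda>p. \<phi> (f p)) \<le> ereal_integral uniform01 (\<lambda>p. \<phi> (g p))"
proof -
  let ?l = "\<lambda>y. \<phi> 0 + right_slope \<phi> 0 * y"
  have fi: "integrable uniform01 f" and gi: "integrable uniform01 g"
    and mean: "(\<integral>p. f p \<partial>uniform01) = (\<integral>p. g p \<partial>uniform01)"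
    using maj by (auto simp: majorized_def)
  have split: "ereal_integral uniform01 (\<lambda>p. \<phi> (h p))
      = enn2ereal (\<integral>\<^sup>+p. ennreal (\<phi> (h p) - ?l (h p)) \<partial>uniform01) + ereal (\<integral>p. ?l (h p) \<partial>uniform01)"
    if h: "integrable uniform01 h" for h
  proof (rule ereal_integral_eq_nn_integral_add)
    note [measurable] = borel_measurable_integrable[OF h] borel_measurable_convex[OF convex]
    show "(\<lambda>p. \<phi> (h p)) \<in> borel_measurable uniform01" "(\<lambda>p. \<phi> (h p) - ?l (h p)) \<in> borel_measurable uniform01"
      by measurable
    show "0 \<le> \<phi> (h p) - ?l (h p)" for p using convex_ge_tangent[OF convex, of 0 "h p"] by simp
  qed (use h in auto)
  have same_mean: "(\<integral>p. ?l (f p) \<partial>uniform01) = (\<integral>p. ?l (g p) \<partial>uniform01)"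
    using fi gi mean by simp
  have "(\<integral>\<^sup>+p. ennreal (\<phi> (f p) - ?l (f p)) \<partial>uniform01) \<le> (\<integral>\<^sup>+p. ennreal (\<phi> (g p) - ?l (g p)) \<partial>uniform01)"
    unfolding nn_integral_convex_minus_tangent_SUP[OF convex uniform01.finite_measure_axioms fi]
      nn_integral_convex_minus_tangent_SUP[OF convex uniform01.finite_measure_axioms gi] same_mean
    by (intro SUP_mono' ennreal_leI diff_right_mono integral_affine_outside_mono[OF convex _ maj f]) simp
  then show ?thesis
    unfolding split[OF fi] split[OF gi] same_mean
    by (intro add_right_mono) (simp add: less_eq_ennreal.rep_eq[symmetric])
qed

lemma cdf_integral_comon_sum:
  assumes F: "\<And>i. i < n \<Longrightarrow> is_cdf (F i)" and \<phi>: "\<phi> \<in> borel_measurable borel"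
  shows "cdf_integral (comon_sum n F) \<phi> = ereal_integral uniform01 (\<lambda>p. \<phi> (\<Sum>i<n. quantile (F i) p))"
proof -
  have "cdf_integral (comon_sum n F) \<phi> = ereal_integral uniform01 (\<lambda>p. \<phi> (quantile (comon_sum n F) p))"
    by (rule cdf_integral_eq_quantile[OF is_cdf_comon_sum[OF F] \<phi>])
  also have "\<dots> = ereal_integral uniform01 (\<lambda>p. \<phi> (\<Sum>i<n. quantile (F i) p))"
    by (rule ereal_integral_cong) (simp add: quantile_comon_sum[OF F])
  finally show ?thesis .
qed

lemma cx_le_trans: "cx_le F G \<Longrightarrow> cx_le G H \<Longrightarrow> cx_le F H"
  unfolding cx_le_def by (meson order_trans)

lemma cx_le_comon_sum_mat_mix:
  assumes F: "\<And>j. j < n \<Longrightarrow> F j \<in> M1" and L: "doubly_stochastic n L"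
  shows "cx_le (comon_sum n F) (comon_sum n (mat_mix n L F))"
  unfolding cx_le_def
proof (intro allI impI)
  fix \<phi> :: "real \<Rightarrow> real" assume convex: "convex_on UNIV \<phi>"
  have cdf: "\<And>j. j < n \<Longrightarrow> is_cdf (F j)" using F by (simp add: M1_def)
  have mix: "\<And>i. i < n \<Longrightarrow> is_cdf (mat_mix n L F i)"
    using cdf L by (auto simp: mat_mix_def doubly_stochastic_def intro!: is_cdf_mixture)
  have maj: "majorized (\<lambda>p. \<Sum>j<n. quantile (F j) p) (\<lambda>p. \<Sum>i<n. quantile (mat_mix n L F i) p)"
    by (rule majorized_quantile_sum_mat_mix) (use F L in auto)
  have mono: "mono_on {0<..<1} (\<lambda>p. \<Sum>j<n. quantile (F j) p)"
    using cdf by (intro mono_onI sum_mono) (auto intro: quantile_mono)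
  show "cdf_integral (comon_sum n F) \<phi> \<le> cdf_integral (comon_sum n (mat_mix n L F)) \<phi>"
    using ereal_integral_convex_mono[OF convex maj mono] borel_measurable_convex[OF convex]
    by (simp add: cdf_integral_comon_sum cdf mix)
qed

theorem theorem6:
  fixes n :: nat and F :: "nat \<Rightarrow> real \<Rightarrow> real" and L :: "nat \<Rightarrow> nat \<Rightarrow> real"
  assumes "\<forall>i<n. F i \<in> M1"
    and "doubly_stochastic n L"
  shows "CF n F \<subseteq> CF n (mat_mix n L F)"
  using cx_le_trans cx_le_comon_sum_mat_mix[of n F L] assms by (auto simp: CF_def)

end
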